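(* Let $X,Y$ be Banach spaces over $\mathbb{K}\in\{\mathbb{R},\mathbb{C}\}$ and let $G\in L(X,Y)$ with $\|G\|=1$. Then for each $T\in L(X,Y)$ the following are equivalent: (i) $\max_{\omega\in S^1}\|G+\omega T\|_G = 1+\|T\|_G$; (ii) $\nu_G(T)=\|T\|_G$.
   Context: $S^1=\{\lambda\in\mathbb{K}:|\lambda|=1\}$; $S_X$ is the unit sphere of $X$, $Y^*$ the dual of $Y$. For $T\in L(X,Y)$: $\|T\|_G := \inf_{\delta>0}\sup\{\|Tx\|: x\in S_X,\ \|Gx\|>1-\delta\}$; $V_G(T):=\bigcap_{\delta>0}\overline{\{y^*(Tx): x\in S_X,\ y^*\in S_{Y^*},\ \operatorname{Re} y^*(Gx)>1-\delta\}}$ and $\nu_G(T):=\max\{|\lambda|:\lambda\in V_G(T)\}$. Standing assumption of the paper: $\|\cdot\|_G$ is a norm on $L(X,Y)$. *)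

theory Defs
  imports "HOL-Analysis.Analysis"
begin

class complex_vector_sp = real_vector +
  fixes scaleC :: "complex \<Rightarrow> 'a \<Rightarrow> 'a"
  assumes scaleC_add_right: "scaleC a (x + y) = scaleC a x + scaleC a y"
    and scaleC_add_left: "scaleC (a + b) x = scaleC a x + scaleC b x"
    and scaleC_scaleC: "scaleC a (scaleC b x) = scaleC (a * b) x"
    and scaleC_one: "scaleC 1 x = x"
    and scaleR_scaleC: "scaleR r x = scaleC (complex_of_real r) x"

class complex_normed_vector_sp = complex_vector_sp + real_normed_vector +
  assumes norm_scaleC: "norm (scaleC a x) = cmod a * norm x"

class complex_banach_sp = complex_normed_vector_sp + complete_space

definition cbounded_linear ::
  "('a::complex_normed_vector_sp \<Rightarrow> 'b::complex_normed_vector_sp) \<Rightarrow> bool" where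
  "cbounded_linear T \<longleftrightarrow> bounded_linear T \<and> (\<forall>c x. T (scaleC c x) = scaleC c (T x))"

definition cdual_sphere :: "('b::complex_normed_vector_sp \<Rightarrow> complex) set" where
  "cdual_sphere = {f. bounded_linear f \<and> (\<forall>c x. f (scaleC c x) = c * f x) \<and> onorm f = 1}"

definition rdual_sphere :: "('b::real_normed_vector \<Rightarrow> real) set" where
  "rdual_sphere = {f. bounded_linear f \<and> onorm f = 1}"

definition normG :: "('a::real_normed_vector \<Rightarrow> 'b::real_normed_vector) \<Rightarrow> ('a \<Rightarrow> 'b) \<Rightarrow> real" where
  "normG G T = (INF \<delta>\<in>{0<..}. SUP x\<in>{x. norm x = 1 \<and> norm (G x) > 1 - \<delta>}. norm (T x))"

definition numrange ::
  "('b \<Rightarrow> 'k::real_normed_vector) set \<Rightarrow> ('k \<Rightarrow> real) \<Rightarrow>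
   ('a::real_normed_vector \<Rightarrow> 'b::real_normed_vector) \<Rightarrow> ('a \<Rightarrow> 'b) \<Rightarrow> 'k set" where
  "numrange D re G T = (\<Inter>\<delta>\<in>{0<..}. closure
      {y (T x) | x y. norm x = 1 \<and> y \<in> D \<and> re (y (G x)) > 1 - \<delta>})"

definition VG_real :: "('a::real_normed_vector \<Rightarrow> 'b::real_normed_vector) \<Rightarrow> ('a \<Rightarrow> 'b) \<Rightarrow> real set" where
  "VG_real G T = numrange rdual_sphere (\<lambda>r. r) G T"

definition VG_complex ::
  "('a::complex_normed_vector_sp \<Rightarrow> 'b::complex_normed_vector_sp) \<Rightarrow> ('a \<Rightarrow> 'b) \<Rightarrow> complex set" where
  "VG_complex G T = numrange cdual_sphere Re G T"

text \<open>Numerical radius: the maximum of |lambda| over the (compact) range, written as a supremum.\<close>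
definition nuG_real :: "('a::real_normed_vector \<Rightarrow> 'b::real_normed_vector) \<Rightarrow> ('a \<Rightarrow> 'b) \<Rightarrow> real" where
  "nuG_real G T = Sup (abs ` VG_real G T)"

definition nuG_complex ::
  "('a::complex_normed_vector_sp \<Rightarrow> 'b::complex_normed_vector_sp) \<Rightarrow> ('a \<Rightarrow> 'b) \<Rightarrow> real" where
  "nuG_complex G T = Sup (cmod ` VG_complex G T)"

end

theory Submission
  imports Defs
begin

text \<open>
  For \<open>|\<omega>| = 1\<close> one always has \<open>\<parallel>G + \<omega>T\<parallel>\<^sub>G \<le> 1 + \<parallel>T\<parallel>\<^sub>G\<close>, and every
  \<open>\<lambda> \<in> V\<^sub>G(T)\<close> gives \<open>\<parallel>G + \<omega>T\<parallel>\<^sub>G \<ge> 1 + |\<lambda>|\<close> for the unimodular \<open>\<omega>\<close> rotating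
  \<open>\<lambda>\<close> onto \<open>|\<lambda>|\<close>; hence \<open>1 + \<nu>\<^sub>G(T) \<le> max\<^sub>\<omega> \<parallel>G + \<omega>T\<parallel>\<^sub>G \<le> 1 + \<parallel>T\<parallel>\<^sub>G\<close>
  and \<open>\<nu>\<^sub>G(T) \<le> \<parallel>T\<parallel>\<^sub>G\<close>. Conversely, if the maximum \<open>1 + \<parallel>T\<parallel>\<^sub>G\<close> is attained at
  \<open>\<omega>\<^sub>0\<close>, a norming functional \<open>y\<close> at an almost maximising unit vector \<open>x\<close> must
  nearly norm both \<open>Gx\<close> and \<open>\<omega>\<^sub>0Tx\<close>; the values \<open>y(Tx)\<close> then accumulate, by
  compactness, at some \<open>\<lambda> \<in> V\<^sub>G(T)\<close> with \<open>|\<lambda>| = \<parallel>T\<parallel>\<^sub>G\<close>.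

  Norming functionals come from the Hahn--Banach theorem, which follows from Zorn's lemma
  because a minimal sublinear functional is linear.
\<close>

section \<open>Sublinear functionals and the Hahn--Banach theorem\<close>

definition sublinear :: "('a::real_vector \<Rightarrow> real) \<Rightarrow> bool" where
  "sublinear q \<longleftrightarrow> (\<forall>x y. q (x + y) \<le> q x + q y) \<and> (\<forall>c x. 0 \<le> c \<longrightarrow> q (c *\<^sub>R x) = c * q x)"

lemma sublinearI:
  assumes "\<And>x y. q (x + y) \<le> q x + q y" and "\<And>c x. 0 \<le> c \<Longrightarrow> q (c *\<^sub>R x) = c * q x"
  shows "sublinear q"
  using assms unfolding sublinear_def by blast

lemma sublinear_add_le: "sublinear q \<Longrightarrow> q (x + y) \<le> q x + q y"
  unfolding sublinear_def by blast

lemma sublinear_scaleR: "sublinear q \<Longrightarrow> 0 \<le> c \<Longrightarrow> q (c *\<^sub>R x) = c * q x"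
  unfolding sublinear_def by blast

lemma sublinear_zero: "sublinear q \<Longrightarrow> q 0 = 0"
  using sublinear_scaleR[of q 0 0] by simp

lemma sublinear_neg_le: "sublinear q \<Longrightarrow> - q (- x) \<le> q x"
  using sublinear_add_le[of q x "- x"] sublinear_zero[of q] by simp

lemma sublinear_norm: "sublinear norm"
  by (rule sublinearI) (simp_all add: norm_triangle_ineq)

text \<open>
  If \<open>q\<close> is minimal among sublinear functionals, then \<open>sublinear_shift q z = q\<close>, which
  forces \<open>q (- z) \<le> - q z\<close>; this is how minimality yields linearity.
\<close>

definition sublinear_shift :: "('a::real_vector \<Rightarrow> real) \<Rightarrow> 'a \<Rightarrow> 'a \<Rightarrow> real" where
  "sublinear_shift q z x = (INF t\<in>{0..}. q (x + t *\<^sub>R z) - t * q z)"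

context
  fixes q :: "'a::real_vector \<Rightarrow> real"
  assumes q: "sublinear q"
begin

lemma sublinear_shift_le: "0 \<le> t \<Longrightarrow> sublinear_shift q z x \<le> q (x + t *\<^sub>R z) - t * q z"
  unfolding sublinear_shift_def
proof (rule cINF_lower)
  show "bdd_below ((\<lambda>t. q (x + t *\<^sub>R z) - t * q z) ` {0..})"
  proof (rule bdd_belowI2)
    fix t :: real assume "t \<in> {0..}"
    have "t * q z = q (t *\<^sub>R z)" using \<open>t \<in> {0..}\<close> q by (simp add: sublinear_scaleR)
    also have "\<dots> \<le> q (x + t *\<^sub>R z) + q (- x)"
      using sublinear_add_le[OF q, of "x + t *\<^sub>R z" "- x"] by simp
    finally show "- q (- x) \<le> q (x + t *\<^sub>R z) - t * q z" by simp
  qed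
qed simp

lemma sublinear_shift_greatest:
  "(\<And>t. 0 \<le> t \<Longrightarrow> a \<le> q (x + t *\<^sub>R z) - t * q z) \<Longrightarrow> a \<le> sublinear_shift q z x"
  unfolding sublinear_shift_def by (rule cINF_greatest) auto

lemma sublinear_shift_le_self: "sublinear_shift q z x \<le> q x"
  using sublinear_shift_le[of 0] by simp

lemma sublinear_shift_neg: "sublinear_shift q z (- z) \<le> - q z"
  using sublinear_shift_le[of 1 z "- z"] sublinear_zero[OF q] by simp

lemma sublinear_sublinear_shift: "sublinear (sublinear_shift q z)"
proof (rule sublinearI)
  fix x y
  have "sublinear_shift q z (x + y) - (q (y + t *\<^sub>R z) - t * q z) \<le> q (x + s *\<^sub>R z) - s * q z"
    if "0 \<le> s" "0 \<le> t" for s t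
  proof -
    have "sublinear_shift q z (x + y) \<le> q ((x + s *\<^sub>R z) + (y + t *\<^sub>R z)) - (s + t) * q z"
      using sublinear_shift_le[of "s + t" z "x + y"] that by (simp add: algebra_simps)
    also have "\<dots> \<le> (q (x + s *\<^sub>R z) - s * q z) + (q (y + t *\<^sub>R z) - t * q z)"
      using sublinear_add_le[OF q, of "x + s *\<^sub>R z" "y + t *\<^sub>R z"] by (simp add: algebra_simps)
    finally show ?thesis by simp
  qed
  then have *: "sublinear_shift q z (x + y) - (q (y + t *\<^sub>R z) - t * q z) \<le> sublinear_shift q z x"
    if "0 \<le> t" for t
    using that by (blast intro: sublinear_shift_greatest)
  have "sublinear_shift q z (x + y) - sublinear_shift q z x \<le> sublinear_shift q z y"
  proof (rule sublinear_shift_greatest)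
    fix t :: real assume "0 \<le> t"
    with * show "sublinear_shift q z (x + y) - sublinear_shift q z x \<le> q (y + t *\<^sub>R z) - t * q z"
      by force
  qed
  then show "sublinear_shift q z (x + y) \<le> sublinear_shift q z x + sublinear_shift q z y"
    by simp
next
  fix c :: real and x assume "0 \<le> c"
  show "sublinear_shift q z (c *\<^sub>R x) = c * sublinear_shift q z x"
  proof (cases "c = 0")
    case True
    have "0 \<le> sublinear_shift q z 0"
      by (rule sublinear_shift_greatest) (simp add: sublinear_scaleR[OF q])
    then show ?thesis
      using True sublinear_shift_le_self[of z 0] sublinear_zero[OF q] by simp
  next
    case False
    with \<open>0 \<le> c\<close> have c: "0 < c" by simp
    \<comment> \<open>the substitution \<open>t = c * s\<close> turns one infimum into \<open>c\<close> times the other\<close>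
    have "sublinear_shift q z (c *\<^sub>R x) \<le> c * (q (x + s *\<^sub>R z) - s * q z)" if "0 \<le> s" for s
      using sublinear_shift_le[of "c * s" z "c *\<^sub>R x"] that c sublinear_scaleR[OF q, of c "x + s *\<^sub>R z"]
      by (simp add: algebra_simps)
    then have "sublinear_shift q z (c *\<^sub>R x) / c \<le> sublinear_shift q z x"
      using c by (intro sublinear_shift_greatest) (simp add: divide_le_eq mult.commute)
    moreover have "c * sublinear_shift q z x \<le> q (c *\<^sub>R x + t *\<^sub>R z) - t * q z" if "0 \<le> t" for t
    proof -
      have "c * sublinear_shift q z x \<le> c * (q (x + (t / c) *\<^sub>R z) - (t / c) * q z)"
        using sublinear_shift_le[of "t / c" z x] that c by (simp add: mult_left_mono)
      also have "\<dots> = q (c *\<^sub>R x + t *\<^sub>R z) - t * q z"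
        using sublinear_scaleR[OF q, of c "x + (t / c) *\<^sub>R z"] c by (simp add: algebra_simps)
      finally show ?thesis .
    qed
    then have "c * sublinear_shift q z x \<le> sublinear_shift q z (c *\<^sub>R x)"
      by (rule sublinear_shift_greatest)
    ultimately show ?thesis using c by (simp add: divide_le_eq mult.commute)
  qed
qed

end

lemma minimal_sublinear_linear:
  assumes q: "sublinear q" and minimal: "\<And>r. sublinear r \<Longrightarrow> r \<le> q \<Longrightarrow> r = q"
  shows "linear q"
proof -
  have odd: "q (- z) = - q z" for z
  proof -
    have "sublinear_shift q z = q"
      by (intro minimal sublinear_sublinear_shift[OF q]) (simp add: le_fun_def sublinear_shift_le_self[OF q])
    then have "q (- z) \<le> - q z" using sublinear_shift_neg[OF q, of z] by simp
    then show ?thesis using sublinear_neg_le[OF q, of "- z"] by simp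
  qed
  show ?thesis
  proof (rule linearI)
    fix x y
    show "q (x + y) = q x + q y"
      using sublinear_add_le[OF q, of x y] sublinear_add_le[OF q, of "x + y" "- y"] odd[of y] by simp
  next
    fix c :: real and x
    show "q (c *\<^sub>R x) = c *\<^sub>R q x"
    proof (cases "0 \<le> c")
      case True then show ?thesis by (simp add: sublinear_scaleR[OF q])
    next
      case False
      then show ?thesis using odd[of "(- c) *\<^sub>R x"] sublinear_scaleR[OF q, of "- c" x] by simp
    qed
  qed
qed

lemma sublinear_INF_chain:
  fixes C :: "('a::real_vector \<Rightarrow> real) set"
  assumes "C \<noteq> {}" and sub: "\<And>q. q \<in> C \<Longrightarrow> sublinear q"
    and chain: "\<And>q r. q \<in> C \<Longrightarrow> r \<in> C \<Longrightarrow> q \<le> r \<or> r \<le> q"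
    and bdd: "\<And>x. bdd_below ((\<lambda>q. q x) ` C)"
  shows "sublinear (\<lambda>x. INF q\<in>C. q x)"
    (is "sublinear ?u")
proof -
  have lower: "?u x \<le> q x" if "q \<in> C" for q x
    by (rule cINF_lower[OF bdd that])
  have greatest: "a \<le> ?u x" if "\<And>q. q \<in> C \<Longrightarrow> a \<le> q x" for a x
    by (rule cINF_greatest[OF \<open>C \<noteq> {}\<close>]) (use that in auto)
  show ?thesis
  proof (rule sublinearI)
    fix x y
    have "?u (x + y) \<le> q x + r y" if "q \<in> C" "r \<in> C" for q r
      using chain[OF that]
    proof
      assume "q \<le> r"
      then show ?thesis
        using lower[OF that(1), of "x + y"] sublinear_add_le[OF sub[OF that(1)], of x y] le_funD[of q r y]
        by linarith
    next
      assume "r \<le> q"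
      then show ?thesis
        using lower[OF that(2), of "x + y"] sublinear_add_le[OF sub[OF that(2)], of x y] le_funD[of r q x]
        by linarith
    qed
    then have "?u (x + y) - r y \<le> ?u x" if "r \<in> C" for r
      using that by (intro greatest) (simp add: algebra_simps)
    then have "?u (x + y) - ?u x \<le> ?u y"
      by (intro greatest) (simp add: algebra_simps)
    then show "?u (x + y) \<le> ?u x + ?u y" by simp
  next
    fix c :: real and x assume "0 \<le> c"
    have scale: "q (c *\<^sub>R x) = c * q x" if "q \<in> C" for q
      using sublinear_scaleR[OF sub[OF that] \<open>0 \<le> c\<close>] .
    show "?u (c *\<^sub>R x) = c * ?u x"
    proof (cases "c = 0")
      case True
      obtain q where "q \<in> C" using \<open>C \<noteq> {}\<close> by blast
      with sublinear_zero[OF sub] have "?u 0 = 0"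
        using lower[of q 0] greatest[of 0 0] by fastforce
      then show ?thesis using True by simp
    next
      case False
      with \<open>0 \<le> c\<close> have c: "0 < c" by simp
      have "?u (c *\<^sub>R x) / c \<le> ?u x"
      proof (rule greatest)
        fix q assume "q \<in> C"
        then show "?u (c *\<^sub>R x) / c \<le> q x"
          using lower[of q "c *\<^sub>R x"] scale[of q] c by (simp add: divide_le_eq mult.commute)
      qed
      moreover have "c * ?u x \<le> ?u (c *\<^sub>R x)"
      proof (rule greatest)
        fix q assume "q \<in> C"
        then show "c * ?u x \<le> q (c *\<^sub>R x)"
          using lower[of q x] scale[of q] c by simp
      qed
      ultimately show ?thesis using c by (simp add: divide_le_eq mult.commute)
    qed
  qed
qed

lemma exists_minimal_sublinear_below:
  fixes p :: "'a::real_vector \<Rightarrow> real"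
  assumes "sublinear p"
  shows "\<exists>m. sublinear m \<and> m \<le> p \<and> (\<forall>r. sublinear r \<and> r \<le> m \<longrightarrow> r = m)"
proof -
  define A where "A = {q. sublinear q \<and> q \<le> p}"
  have po: "partial_order_on A (relation_of (\<lambda>q r. r \<le> q) A)"
    by (rule partial_order_on_relation_ofI) auto
  have "\<exists>u\<in>A. \<forall>q\<in>C. u \<le> q" if C: "C \<in> Chains (relation_of (\<lambda>q r. r \<le> q) A)" for C
  proof (cases "C = {}")
    case True
    then show ?thesis using assms unfolding A_def by auto
  next
    case False
    have CA: "C \<subseteq> A" and chain: "\<And>q r. q \<in> C \<Longrightarrow> r \<in> C \<Longrightarrow> q \<le> r \<or> r \<le> q"
      using C unfolding Chains_def relation_of_def by blast+
    have bdd: "bdd_below ((\<lambda>q. q x) ` C)" for x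
    proof (rule bdd_belowI2)
      fix q assume "q \<in> C"
      then have "sublinear q" "q (- x) \<le> p (- x)" using CA unfolding A_def le_fun_def by auto
      then show "- p (- x) \<le> q x" using sublinear_neg_le[of q x] by linarith
    qed
    define u where "u x = (INF q\<in>C. q x)" for x
    have "sublinear u"
      unfolding u_def using False CA chain bdd by (intro sublinear_INF_chain) (auto simp: A_def)
    moreover have lower: "u \<le> q" if "q \<in> C" for q
      unfolding u_def le_fun_def using bdd that by (auto intro: cINF_lower)
    moreover have "u \<le> p"
      using False lower CA unfolding A_def by (auto intro: order_trans)
    ultimately show ?thesis unfolding A_def by blast
  qed
  then obtain m where "m \<in> A" and "\<forall>r\<in>A. r \<le> m \<longrightarrow> r = m"
    using predicate_Zorn[OF po] by blast
  then show ?thesis unfolding A_def by (auto intro: order_trans)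
qed

lemma exists_norming_functional:
  fixes z :: "'a::real_normed_vector"
  shows "\<exists>f. bounded_linear f \<and> (\<forall>x. \<bar>f x\<bar> \<le> norm x) \<and> f z = norm z"
proof -
  obtain m where m: "sublinear m" "m \<le> sublinear_shift norm z"
    and minimal: "\<And>r. sublinear r \<Longrightarrow> r \<le> m \<Longrightarrow> r = m"
    using exists_minimal_sublinear_below[OF sublinear_sublinear_shift[OF sublinear_norm]] by blast
  have lin: "linear m" using minimal_sublinear_linear[OF m(1)] minimal by blast
  have le_norm: "m x \<le> norm x" for x
    using m(2) sublinear_shift_le_self[OF sublinear_norm, of z x] by (auto simp: le_fun_def intro: order_trans)
  have abs_le: "\<bar>m x\<bar> \<le> norm x" for x
    using le_norm[of x] le_norm[of "- x"] linear_neg[OF lin, of x] by simp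
  have "m (- z) \<le> - norm z"
    using m(2) sublinear_shift_neg[OF sublinear_norm, of z] by (auto simp: le_fun_def intro: order_trans)
  then have "m z = norm z" using le_norm[of z] linear_neg[OF lin, of z] by simp
  moreover have "bounded_linear m"
    using lin abs_le by (intro bounded_linear_intro[where K = 1]) (auto simp: linear_add linear_scale)
  ultimately show ?thesis using abs_le by blast
qed

section \<open>Norming functionals on real and complex spaces\<close>

lemma onorm_eq_1_if_norming:
  fixes f :: "'a::real_normed_vector \<Rightarrow> 'b::real_normed_vector"
  assumes "bounded_linear f" and "\<And>x. norm (f x) \<le> norm x" and "v \<noteq> 0" and "norm (f v) = norm v"
  shows "onorm f = 1"
proof (rule order_antisym)
  show "onorm f \<le> 1" using assms(2) by (intro onorm_bound) auto
  show "1 \<le> onorm f" using onorm[OF assms(1), of v] assms(3,4) by simp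
qed

lemma exists_rdual_sphere_norming:
  fixes v :: "'a::real_normed_vector"
  assumes "v \<noteq> 0"
  shows "\<exists>y\<in>rdual_sphere. y v = norm v"
proof -
  obtain f where "bounded_linear f" "\<And>x. \<bar>f x\<bar> \<le> norm x" "f v = norm v"
    using exists_norming_functional by blast
  then show ?thesis
    using onorm_eq_1_if_norming[of f v] assms unfolding rdual_sphere_def by auto
qed

lemma exists_norm_one_mult_eq_norm:
  fixes l :: "'k::real_normed_field"
  shows "\<exists>w. norm w = 1 \<and> w * l = of_real (norm l)"
proof (cases "l = 0")
  case False
  then show ?thesis
    by (intro exI[of _ "of_real (norm l) / l"]) (simp add: norm_divide)
qed (auto intro: exI[of _ 1])

lemma scaleC_of_real: "scaleC (complex_of_real r) x = r *\<^sub>R x"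
  by (simp add: scaleR_scaleC)

lemma scaleC_scaleR_commute: "scaleC c (r *\<^sub>R x) = r *\<^sub>R scaleC c x"
  by (simp add: scaleR_scaleC scaleC_scaleC mult.commute)

lemma scaleC_ii: "scaleC \<i> (scaleC \<i> x) = - x"
  using scaleC_of_real[of "-1" x] by (simp add: scaleC_scaleC)

lemma scaleC_Re_Im: "scaleC c x = Re c *\<^sub>R x + Im c *\<^sub>R scaleC \<i> x"
proof -
  have "c = complex_of_real (Re c) + complex_of_real (Im c) * \<i>"
    by (simp add: complex_eq_iff)
  then have "scaleC c x = scaleC (complex_of_real (Re c)) x + scaleC (complex_of_real (Im c) * \<i>) x"
    by (metis scaleC_add_left)
  then show ?thesis by (simp add: scaleC_of_real scaleC_scaleC[symmetric])
qed

lemma scaleC_diff_left: "scaleC a x - scaleC b x = scaleC (a - b) x"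
  using scaleC_add_left[of "a - b" b x] by simp

lemma bounded_linear_scaleC: "bounded_linear (scaleC c :: 'a::complex_normed_vector_sp \<Rightarrow> 'a)"
  by (rule bounded_linear_intro[where K = "cmod c"])
    (simp_all add: scaleC_add_right scaleC_scaleR_commute norm_scaleC)

lemma exists_cdual_sphere_norming:
  fixes v :: "'a::complex_normed_vector_sp"
  assumes "v \<noteq> 0"
  shows "\<exists>y\<in>cdual_sphere. y v = complex_of_real (norm v)"
proof -
  obtain g :: "'a \<Rightarrow> real" where g: "bounded_linear g" "\<And>x. \<bar>g x\<bar> \<le> norm x" "g v = norm v"
    using exists_norming_functional by blast
  interpret g: bounded_linear g by (fact g(1))
  \<comment> \<open>a complex functional is determined by its real part \<open>g\<close> as \<open>g x - \<i> g (\<i> x)\<close>\<close>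
  define f where "f x = complex_of_real (g x) - \<i> * complex_of_real (g (scaleC \<i> x))" for x
  have Re_f: "Re (f x) = g x" for x unfolding f_def by simp
  have f_add: "f (x + y) = f x + f y" for x y
    unfolding f_def by (simp add: scaleC_add_right g.add algebra_simps)
  have f_scaleR: "f (r *\<^sub>R x) = complex_of_real r * f x" for r x
    unfolding f_def by (simp add: scaleC_scaleR_commute g.scale algebra_simps)
  have f_scaleC: "f (scaleC c x) = c * f x" for c x
  proof -
    have "f (scaleC \<i> x) = \<i> * f x"
      unfolding f_def by (simp add: scaleC_ii g.neg algebra_simps)
    then have "f (scaleC c x) = (complex_of_real (Re c) + \<i> * complex_of_real (Im c)) * f x"
      unfolding scaleC_Re_Im[of c x] by (simp add: f_add f_scaleR algebra_simps)
    also have "complex_of_real (Re c) + \<i> * complex_of_real (Im c) = c"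
      by (simp add: complex_eq_iff)
    finally show ?thesis .
  qed
  have f_le: "cmod (f x) \<le> norm x" for x
  proof -
    obtain w where w: "cmod w = 1" "w * f x = complex_of_real (cmod (f x))"
      using exists_norm_one_mult_eq_norm by blast
    have "cmod (f x) = g (scaleC w x)" using Re_f[of "scaleC w x"] w(2) by (simp add: f_scaleC)
    also have "\<dots> \<le> norm x" using g(2)[of "scaleC w x"] w(1) by (simp add: norm_scaleC)
    finally show ?thesis .
  qed
  have f_lin: "bounded_linear f"
    by (rule bounded_linear_intro[where K = 1]) (simp_all add: f_add f_scaleR f_le scaleR_conv_of_real)
  have "(norm v)\<^sup>2 + (Im (f v))\<^sup>2 = (cmod (f v))\<^sup>2"
    using Re_f[of v] g(3) by (simp add: cmod_power2)
  also have "\<dots> \<le> (norm v)\<^sup>2"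
    using f_le[of v] by (simp add: power_mono)
  finally have "Im (f v) = 0" by simp
  then have "f v = complex_of_real (norm v)"
    using Re_f[of v] g(3) by (simp add: complex_eq_iff)
  then show ?thesis
    using onorm_eq_1_if_norming[OF f_lin f_le assms] f_lin f_scaleC unfolding cdual_sphere_def by auto
qed

section \<open>The \<open>G\<close>-norm\<close>

locale norm_one_operator =
  fixes G :: "'a::real_normed_vector \<Rightarrow> 'b::real_normed_vector"
  assumes bounded_linear_G: "bounded_linear G" and onorm_G: "onorm G = 1"
begin

definition slice :: "real \<Rightarrow> 'a set" where
  "slice \<delta> = {x. norm x = 1 \<and> 1 - \<delta> < norm (G x)}"

definition slice_sup :: "('a \<Rightarrow> 'b) \<Rightarrow> real \<Rightarrow> real" where
  "slice_sup S \<delta> = (SUP x\<in>slice \<delta>. norm (S x))"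

lemma normG_eq_INF_slice_sup: "normG G S = (INF \<delta>\<in>{0<..}. slice_sup S \<delta>)"
  unfolding normG_def slice_sup_def slice_def ..

lemma norm_G_le: "norm (G x) \<le> norm x"
  using onorm[OF bounded_linear_G, of x] onorm_G by simp

lemma slice_mono: "\<delta> \<le> \<delta>' \<Longrightarrow> slice \<delta> \<subseteq> slice \<delta>'"
  unfolding slice_def by auto

lemma slice_nonempty:
  assumes "0 < \<delta>"
  shows "slice \<delta> \<noteq> {}"
proof
  assume empty: "slice \<delta> = {}"
  interpret G: bounded_linear G by (fact bounded_linear_G)
  have "norm (G x) \<le> max 0 (1 - \<delta>) * norm x" for x
  proof (cases "x = 0")
    case False
    then have "sgn x \<notin> slice \<delta>" using empty by blast
    then have "norm (G (sgn x)) \<le> max 0 (1 - \<delta>)" using False by (simp add: slice_def norm_sgn)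
    then show ?thesis using False by (simp add: sgn_div_norm G.scaleR field_simps)
  qed simp
  then have "onorm G \<le> max 0 (1 - \<delta>)" by (intro onorm_bound) auto
  then show False using onorm_G assms by simp
qed

context
  fixes S :: "'a \<Rightarrow> 'b"
  assumes S: "bounded_linear S"
begin

lemma bdd_above_slice_norms: "bdd_above ((\<lambda>x. norm (S x)) ` slice \<delta>)"
proof (rule bdd_aboveI2[where M = "onorm S"])
  fix x assume "x \<in> slice \<delta>"
  then show "norm (S x) \<le> onorm S" using onorm[OF S, of x] by (simp add: slice_def)
qed

lemma slice_sup_upper: "x \<in> slice \<delta> \<Longrightarrow> norm (S x) \<le> slice_sup S \<delta>"
  unfolding slice_sup_def by (rule cSUP_upper[OF _ bdd_above_slice_norms])

lemma slice_sup_nonneg: "0 < \<delta> \<Longrightarrow> 0 \<le> slice_sup S \<delta>"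
proof -
  assume "0 < \<delta>"
  then obtain x where "x \<in> slice \<delta>" using slice_nonempty by blast
  then show ?thesis using slice_sup_upper[of x \<delta>] norm_ge_zero[of "S x"] by linarith
qed

lemma bdd_below_slice_sups: "bdd_below (slice_sup S ` {0<..})"
  using slice_sup_nonneg by (intro bdd_belowI2[where m = 0]) simp

lemma normG_le_slice_sup: "0 < \<delta> \<Longrightarrow> normG G S \<le> slice_sup S \<delta>"
  unfolding normG_eq_INF_slice_sup by (rule cINF_lower[OF bdd_below_slice_sups]) simp

lemma normG_approx_above:
  assumes "0 < e"
  obtains \<delta> where "0 < \<delta>" "\<And>x. x \<in> slice \<delta> \<Longrightarrow> norm (S x) < normG G S + e"
proof -
  have "(INF \<delta>\<in>{0<..}. slice_sup S \<delta>) < normG G S + e"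
    using assms by (simp add: normG_eq_INF_slice_sup)
  then obtain \<delta> where "0 < \<delta>" "slice_sup S \<delta> < normG G S + e"
    using cINF_less_iff[OF _ bdd_below_slice_sups] by auto
  then show ?thesis using that slice_sup_upper by (meson order.strict_trans1)
qed

lemma normG_approx_below:
  assumes "0 < \<delta>" and "0 < e"
  obtains x where "x \<in> slice \<delta>" "normG G S - e < norm (S x)"
proof -
  have "normG G S - e < (SUP x\<in>slice \<delta>. norm (S x))"
    using normG_le_slice_sup[OF assms(1)] assms(2) unfolding slice_sup_def by simp
  then show ?thesis
    using that less_cSUP_iff[OF slice_nonempty[OF assms(1)] bdd_above_slice_norms] by blast
qed

end

lemma normG_ge:
  assumes "bounded_linear S"
    and near: "\<And>\<delta> e. 0 < \<delta> \<Longrightarrow> 0 < e \<Longrightarrow> \<exists>x\<in>slice \<delta>. a - e \<le> norm (S x)"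
  shows "a \<le> normG G S"
proof (rule ccontr)
  assume "\<not> a \<le> normG G S"
  then have e: "0 < (a - normG G S) / 2" by simp
  obtain \<delta> where "0 < \<delta>" and small: "\<And>x. x \<in> slice \<delta> \<Longrightarrow> norm (S x) < normG G S + (a - normG G S) / 2"
    using normG_approx_above[OF assms(1) e] by blast
  obtain x where "x \<in> slice \<delta>" and "a - (a - normG G S) / 2 \<le> norm (S x)"
    using near[OF \<open>0 < \<delta>\<close> e] by blast
  with small[OF \<open>x \<in> slice \<delta>\<close>] show False by argo
qed

lemma normG_nonneg:
  assumes "bounded_linear S"
  shows "0 \<le> normG G S"
proof (rule normG_ge[OF assms])
  fix \<delta> e :: real assume "0 < \<delta>" "0 < e"
  then obtain x where "x \<in> slice \<delta>" using slice_nonempty by blast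
  moreover have "0 - e \<le> norm (S x)" using \<open>0 < e\<close> norm_ge_zero[of "S x"] by linarith
  ultimately show "\<exists>x\<in>slice \<delta>. 0 - e \<le> norm (S x)" by blast
qed

lemma normG_le_add:
  assumes "bounded_linear S" and "bounded_linear S'"
    and le: "\<And>x. norm x = 1 \<Longrightarrow> norm (S x) \<le> c + norm (S' x)"
  shows "normG G S \<le> c + normG G S'"
proof (rule field_le_epsilon)
  fix e :: real assume "0 < e"
  obtain \<delta> where "0 < \<delta>" and S': "\<And>x. x \<in> slice \<delta> \<Longrightarrow> norm (S' x) < normG G S' + e / 2"
    using normG_approx_above[OF assms(2), of "e / 2"] \<open>0 < e\<close> by auto
  obtain x where "x \<in> slice \<delta>" and S: "normG G S - e / 2 < norm (S x)"
    using normG_approx_below[OF assms(1) \<open>0 < \<delta>\<close>, of "e / 2"] \<open>0 < e\<close> by auto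
  then show "normG G S \<le> c + normG G S' + e"
    using S'[of x] le[of x] by (simp add: slice_def)
qed

end

section \<open>The \<open>G\<close>-numerical range\<close>

lemma nested_closures_Inter_nonempty:
  fixes S :: "real \<Rightarrow> 'a::heine_borel set"
  assumes nonempty: "\<And>\<delta>. 0 < \<delta> \<Longrightarrow> S \<delta> \<noteq> {}"
    and mono: "\<And>\<delta> \<delta>'. \<delta> \<le> \<delta>' \<Longrightarrow> S \<delta> \<subseteq> S \<delta>'"
    and bounded: "\<And>\<delta>. bounded (S \<delta>)"
  shows "(\<Inter>\<delta>\<in>{0<..}. closure (S \<delta>)) \<noteq> {}"
proof -
  define K where "K n = closure (S (1 / Suc n))" for n
  have "\<Inter>(range K) \<noteq> {}"
  proof (rule compact_nest)
    show "compact (K n)" "K n \<noteq> {}" for n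
      unfolding K_def using bounded nonempty by (auto simp: compact_closure)
    show "m \<le> n \<Longrightarrow> K n \<subseteq> K m" for m n
      unfolding K_def by (intro closure_mono mono) (simp add: frac_le)
  qed
  then obtain l where l: "\<And>n. l \<in> K n" by blast
  have "l \<in> closure (S \<delta>)" if "0 < \<delta>" for \<delta>
  proof -
    obtain n where "inverse (Suc n) < \<delta>" using reals_Archimedean[OF \<open>0 < \<delta>\<close>] by blast
    then have "K n \<subseteq> closure (S \<delta>)"
      unfolding K_def by (intro closure_mono mono) (simp add: inverse_eq_divide)
    then show ?thesis using l by blast
  qed
  then show ?thesis by blast
qed

text \<open>
  The scalar field \<open>'k\<close> is abstracted: \<open>D\<close> plays the unit sphere of the dual, \<open>re\<close> the
  real part and \<open>sc\<close> the scalar multiplication. The real case takes \<open>(rdual_sphere, id, scaleR)\<close>,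
  the complex case \<open>(cdual_sphere, Re, scaleC)\<close>.
\<close>

locale G_numerical_range = norm_one_operator G
  for G :: "'a::real_normed_vector \<Rightarrow> 'b::real_normed_vector" +
  fixes T :: "'a \<Rightarrow> 'b"
    and D :: "('b \<Rightarrow> 'k::{real_normed_field,heine_borel}) set"
    and re :: "'k \<Rightarrow> real"
    and sc :: "'k \<Rightarrow> 'b \<Rightarrow> 'b"
  assumes bounded_linear_T: "bounded_linear T"
    and D_add: "y \<in> D \<Longrightarrow> y (u + v) = y u + y v"
    and D_sc: "y \<in> D \<Longrightarrow> y (sc w v) = w * y v"
    and D_norm_le: "y \<in> D \<Longrightarrow> norm (y v) \<le> norm v"
    and D_norming: "v \<noteq> 0 \<Longrightarrow> \<exists>y\<in>D. y v = of_real (norm v)"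
    and bounded_linear_sc: "bounded_linear (sc w)"
    and norm_sc: "norm (sc w v) = norm w * norm v"
    and sc_diff: "sc w v - sc w' v = sc (w - w') v"
    and bounded_linear_re: "bounded_linear re"
    and re_of_real: "re (of_real r) = r"
    and re_le_norm: "re a \<le> norm a"
begin

definition F :: "'k \<Rightarrow> 'a \<Rightarrow> 'b" where
  "F w = (\<lambda>x. G x + sc w (T x))"

definition approx_values :: "real \<Rightarrow> 'k set" where
  "approx_values \<delta> = {y (T x) | x y. norm x = 1 \<and> y \<in> D \<and> re (y (G x)) > 1 - \<delta>}"

abbreviation V :: "'k set" where
  "V \<equiv> numrange D re G T"

lemma V_eq: "V = (\<Inter>\<delta>\<in>{0<..}. closure (approx_values \<delta>))"
  unfolding numrange_def approx_values_def ..

lemma approx_values_mono: "\<delta> \<le> \<delta>' \<Longrightarrow> approx_values \<delta> \<subseteq> approx_values \<delta>'"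
  unfolding approx_values_def by fastforce

lemma D_re_le_norm: "y \<in> D \<Longrightarrow> re (y v) \<le> norm v"
  using re_le_norm[of "y v"] D_norm_le[of y v] by linarith

lemma approx_valuesE:
  assumes "s \<in> approx_values \<delta>"
  obtains x y where "s = y (T x)" "x \<in> slice \<delta>" "y \<in> D" "1 - \<delta> < re (y (G x))"
proof -
  obtain x y where "s = y (T x)" "norm x = 1" "y \<in> D" "1 - \<delta> < re (y (G x))"
    using assms unfolding approx_values_def by blast
  moreover from this have "x \<in> slice \<delta>"
    using D_re_le_norm[of y "G x"] by (simp add: slice_def)
  ultimately show ?thesis using that by blast
qed

lemma norm_T_le: "norm x = 1 \<Longrightarrow> norm (T x) \<le> onorm T"
  using onorm[OF bounded_linear_T, of x] by simp

lemma bounded_approx_values: "bounded (approx_values \<delta>)"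
proof (rule boundedI)
  fix s assume "s \<in> approx_values \<delta>"
  then obtain x y where "s = y (T x)" "x \<in> slice \<delta>" "y \<in> D" by (rule approx_valuesE)
  then show "norm s \<le> onorm T"
    using D_norm_le[of y "T x"] norm_T_le[of x] by (simp add: slice_def)
qed

lemma V_nonempty: "V \<noteq> {}"
  unfolding V_eq
proof (rule nested_closures_Inter_nonempty[OF _ approx_values_mono bounded_approx_values])
  fix \<delta> :: real assume "0 < \<delta>"
  then obtain x where "x \<in> slice (min \<delta> 1)" using slice_nonempty by fastforce
  then have "norm x = 1" "1 - min \<delta> 1 < norm (G x)" by (auto simp: slice_def)
  then obtain y where "y \<in> D" "y (G x) = of_real (norm (G x))"
    using D_norming by force
  then have "y (T x) \<in> approx_values \<delta>"
    using \<open>norm x = 1\<close> \<open>1 - min \<delta> 1 < norm (G x)\<close> unfolding approx_values_def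
    by (fastforce simp: re_of_real)
  then show "approx_values \<delta> \<noteq> {}" by blast
qed

lemma norm_le_normG_if_in_V:
  assumes "l \<in> V"
  shows "norm l \<le> normG G T"
proof (rule field_le_epsilon)
  fix e :: real assume "0 < e"
  then obtain \<delta> where "0 < \<delta>" and small: "\<And>x. x \<in> slice \<delta> \<Longrightarrow> norm (T x) < normG G T + e"
    using normG_approx_above[OF bounded_linear_T] by blast
  have "approx_values \<delta> \<subseteq> cball 0 (normG G T + e)"
  proof
    fix s assume "s \<in> approx_values \<delta>"
    then obtain x y where "s = y (T x)" "x \<in> slice \<delta>" "y \<in> D" by (rule approx_valuesE)
    then show "s \<in> cball 0 (normG G T + e)"
      using D_norm_le[of y "T x"] small[of x] by simp
  qed
  then have "closure (approx_values \<delta>) \<subseteq> cball 0 (normG G T + e)"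
    by (simp add: closure_minimal)
  moreover have "l \<in> closure (approx_values \<delta>)" using assms \<open>0 < \<delta>\<close> unfolding V_eq by blast
  ultimately show "norm l \<le> normG G T + e" by auto
qed

lemma bounded_linear_F: "bounded_linear (F w)"
  unfolding F_def
  by (intro bounded_linear_add bounded_linear_G bounded_linear_compose[OF bounded_linear_sc bounded_linear_T])

lemma normG_F_le: "norm w = 1 \<Longrightarrow> normG G (F w) \<le> 1 + normG G T"
proof (rule normG_le_add[OF bounded_linear_F bounded_linear_T])
  fix x :: 'a assume "norm w = 1" "norm x = 1"
  then show "norm (F w x) \<le> 1 + norm (T x)"
    using norm_triangle_ineq[of "G x" "sc w (T x)"] norm_G_le[of x] by (simp add: F_def norm_sc)
qed

lemma lipschitz_normG_F: "(onorm T)-lipschitz_on UNIV (\<lambda>w. normG G (F w))"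
proof (rule lipschitz_onI)
  have "normG G (F w) \<le> dist w w' * onorm T + normG G (F w')" for w w'
  proof (rule normG_le_add[OF bounded_linear_F bounded_linear_F])
    fix x :: 'a assume "norm x = 1"
    have "F w x = F w' x + sc (w - w') (T x)" by (simp add: F_def sc_diff[symmetric])
    then show "norm (F w x) \<le> dist w w' * onorm T + norm (F w' x)"
      using norm_triangle_ineq[of "F w' x" "sc (w - w') (T x)"] norm_T_le[OF \<open>norm x = 1\<close>]
        mult_left_mono[of "norm (T x)" "onorm T" "dist w w'"]
      by (simp add: norm_sc dist_norm)
  qed
  note le = this
  show "dist (normG G (F w)) (normG G (F w')) \<le> onorm T * dist w w'" for w w'
    using le[of w w'] le[of w' w] by (simp add: dist_real_def dist_commute abs_le_iff mult.commute)
  show "0 \<le> onorm T" by (rule onorm_pos_le[OF bounded_linear_T])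
qed

lemma normG_F_attains_max: "\<exists>w\<in>sphere 0 1. \<forall>w'\<in>sphere 0 1. normG G (F w') \<le> normG G (F w)"
proof (rule continuous_attains_sup)
  show "sphere (0::'k) 1 \<noteq> {}" using norm_one by (metis mem_sphere_0 empty_iff)
  show "continuous_on (sphere 0 1) (\<lambda>w. normG G (F w))"
    using lipschitz_on_continuous_on[OF lipschitz_normG_F] continuous_on_subset by blast
qed simp

lemma normG_F_ge:
  assumes "l \<in> V" and w: "norm w = 1" "w * l = of_real (norm l)"
  shows "1 + norm l \<le> normG G (F w)"
proof (rule normG_ge[OF bounded_linear_F])
  fix \<delta> e :: real assume "0 < \<delta>" "0 < e"
  then have "l \<in> closure (approx_values (min \<delta> (e / 2)))" using assms(1) unfolding V_eq by auto
  then obtain s where "s \<in> approx_values (min \<delta> (e / 2))" "dist s l < e / 2"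
    using \<open>0 < e\<close> unfolding closure_approachable by (meson half_gt_zero)
  then obtain x y where s: "s = y (T x)" and x: "x \<in> slice (min \<delta> (e / 2))" and "y \<in> D"
    and Gx: "1 - min \<delta> (e / 2) < re (y (G x))"
    by (elim approx_valuesE)
  interpret re: bounded_linear re by (fact bounded_linear_re)
  have "re (y (F w x)) = re (y (G x)) + norm l + re (w * (s - l))"
    using D_add[OF \<open>y \<in> D\<close>] D_sc[OF \<open>y \<in> D\<close>] w(2) s
    by (simp add: F_def re.add re.diff re_of_real algebra_simps)
  moreover have "- (e / 2) \<le> re (w * (s - l))"
    using re_le_norm[of "- (w * (s - l))"] \<open>dist s l < e / 2\<close> w(1)
    by (simp add: re.neg norm_mult dist_norm)
  moreover have "re (y (F w x)) \<le> norm (F w x)" by (rule D_re_le_norm[OF \<open>y \<in> D\<close>])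
  ultimately have "1 + norm l - e \<le> norm (F w x)" using Gx by linarith
  moreover have "x \<in> slice \<delta>" using x slice_mono[of "min \<delta> (e / 2)" \<delta>] by auto
  ultimately show "\<exists>x\<in>slice \<delta>. 1 + norm l - e \<le> norm (F w x)" by blast
qed

lemma exists_V_norm_eq_normG:
  assumes w0: "norm w0 = 1" and max: "normG G (F w0) = 1 + normG G T"
  shows "\<exists>l\<in>V. norm l = normG G T"
proof -
  define t where "t = normG G T"
  define S where "S \<delta> = {s \<in> approx_values \<delta>. t - \<delta> < re (w0 * s)}" for \<delta>
  interpret re: bounded_linear re by (fact bounded_linear_re)
  have S_mono: "S \<delta> \<subseteq> S \<delta>'" if "\<delta> \<le> \<delta>'" for \<delta> \<delta>'
    using approx_values_mono[OF that] that unfolding S_def by auto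
  \<comment> \<open>a norming functional at an almost maximising \<open>x\<close> for \<open>F w0\<close> nearly norms both \<open>G x\<close> and \<open>w0 T x\<close>\<close>
  have S_nonempty: "S \<delta> \<noteq> {}" if "0 < \<delta>" "\<delta> \<le> 1" for \<delta>
  proof -
    obtain \<delta>' where "0 < \<delta>'" and T_small: "\<And>x. x \<in> slice \<delta>' \<Longrightarrow> norm (T x) < t + \<delta> / 2"
      using normG_approx_above[OF bounded_linear_T, of "\<delta> / 2"] \<open>0 < \<delta>\<close> unfolding t_def by auto
    obtain x where x: "x \<in> slice \<delta>'" and F_big: "1 + t - \<delta> / 2 < norm (F w0 x)"
      using normG_approx_below[OF bounded_linear_F[of w0] \<open>0 < \<delta>'\<close>, of "\<delta> / 2"] \<open>0 < \<delta>\<close> max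
      unfolding t_def by auto
    have "0 \<le> t" unfolding t_def by (rule normG_nonneg[OF bounded_linear_T])
    with F_big \<open>\<delta> \<le> 1\<close> have "F w0 x \<noteq> 0" by auto
    then obtain y where "y \<in> D" and y: "y (F w0 x) = of_real (norm (F w0 x))"
      using D_norming by blast
    have "re (y (G x)) + re (w0 * y (T x)) = re (y (F w0 x))"
      using D_add[OF \<open>y \<in> D\<close>] D_sc[OF \<open>y \<in> D\<close>] by (simp add: F_def re.add)
    also have "\<dots> = norm (F w0 x)" using y by (simp add: re_of_real)
    finally have "re (y (G x)) + re (w0 * y (T x)) = norm (F w0 x)" .
    moreover have "norm x = 1" using x by (simp add: slice_def)
    moreover have "re (y (G x)) \<le> 1"
      using D_re_le_norm[OF \<open>y \<in> D\<close>, of "G x"] norm_G_le[of x] \<open>norm x = 1\<close> by simp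
    moreover have "re (w0 * y (T x)) < t + \<delta> / 2"
      using re_le_norm[of "w0 * y (T x)"] D_norm_le[OF \<open>y \<in> D\<close>, of "T x"] T_small[OF x] w0
      by (simp add: norm_mult)
    ultimately have "1 - \<delta> < re (y (G x))" "t - \<delta> < re (w0 * y (T x))" "norm x = 1"
      using F_big by linarith+
    then have "y (T x) \<in> S \<delta>"
      using \<open>y \<in> D\<close> unfolding S_def approx_values_def by blast
    then show ?thesis by blast
  qed
  have "(\<Inter>\<delta>\<in>{0<..}. closure (S \<delta>)) \<noteq> {}"
  proof (rule nested_closures_Inter_nonempty[OF _ S_mono])
    fix \<delta> :: real assume "0 < \<delta>"
    then show "S \<delta> \<noteq> {}"
      using S_mono[of "min \<delta> 1" \<delta>] S_nonempty[of "min \<delta> 1"] by auto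
  next
    show "bounded (S \<delta>)" for \<delta>
      by (rule bounded_subset[OF bounded_approx_values]) (auto simp: S_def)
  qed
  then obtain l where l: "\<And>\<delta>. 0 < \<delta> \<Longrightarrow> l \<in> closure (S \<delta>)" by blast
  have "closure (S \<delta>) \<subseteq> closure (approx_values \<delta>)" for \<delta>
    by (rule closure_mono) (auto simp: S_def)
  with l have "l \<in> V" unfolding V_eq by blast
  have near: "t - \<delta> \<le> re (w0 * l)" if "0 < \<delta>" for \<delta>
  proof -
    have "closed {s. t - \<delta> \<le> re (w0 * s)}"
      by (intro closed_Collect_le continuous_intros re.continuous_on)
    then have "closure (S \<delta>) \<subseteq> {s. t - \<delta> \<le> re (w0 * s)}"
      by (intro closure_minimal) (auto simp: S_def)
    then show ?thesis using l[OF that] by blast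
  qed
  have "t \<le> re (w0 * l)"
    by (rule field_le_epsilon) (use near in force)
  also have "\<dots> \<le> norm l" using re_le_norm[of "w0 * l"] w0 by (simp add: norm_mult)
  finally show ?thesis
    using \<open>l \<in> V\<close> norm_le_normG_if_in_V[OF \<open>l \<in> V\<close>] unfolding t_def by force
qed

theorem Sup_normG_F_eq_iff:
  "Sup ((\<lambda>w. normG G (F w)) ` sphere 0 1) = 1 + normG G T \<longleftrightarrow> Sup (norm ` V) = normG G T"
proof -
  obtain w0 where w0: "w0 \<in> sphere 0 1" and max: "\<And>w. w \<in> sphere 0 1 \<Longrightarrow> normG G (F w) \<le> normG G (F w0)"
    using normG_F_attains_max by blast
  have Sup_F: "Sup ((\<lambda>w. normG G (F w)) ` sphere 0 1) = normG G (F w0)"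
    using w0 max by (intro cSup_eq_maximum) auto
  have bdd: "bdd_above (norm ` V)"
    using norm_le_normG_if_in_V by (intro bdd_aboveI2) auto
  have "Sup (norm ` V) \<le> normG G T"
    using V_nonempty norm_le_normG_if_in_V by (intro cSup_least) auto
  moreover have "1 + Sup (norm ` V) \<le> normG G (F w0)"
  proof -
    have le: "norm l \<le> normG G (F w0) - 1" if "l \<in> V" for l
    proof -
      obtain w where "norm w = 1" "w * l = of_real (norm l)"
        using exists_norm_one_mult_eq_norm by blast
      then show ?thesis using normG_F_ge[OF that] max[of w] by force
    qed
    have "Sup (norm ` V) \<le> normG G (F w0) - 1"
      using V_nonempty le by (intro cSup_least) auto
    then show ?thesis by simp
  qed
  moreover have "normG G (F w0) \<le> 1 + normG G T"
    using normG_F_le w0 by simp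
  moreover have "Sup (norm ` V) = normG G T" if eq: "normG G (F w0) = 1 + normG G T"
  proof -
    obtain l where "l \<in> V" "norm l = normG G T"
      using exists_V_norm_eq_normG[OF _ eq] w0 by auto
    then show ?thesis using cSup_upper[OF _ bdd, of "norm l"] \<open>Sup (norm ` V) \<le> normG G T\<close> by force
  qed
  ultimately show ?thesis unfolding Sup_F by linarith
qed

end

lemma G_numerical_range_real:
  fixes G T :: "'a::real_normed_vector \<Rightarrow> 'b::real_normed_vector"
  assumes "bounded_linear G" "onorm G = 1" "bounded_linear T"
  shows "G_numerical_range G T rdual_sphere (\<lambda>r. r) scaleR"
proof (intro G_numerical_range.intro norm_one_operator.intro G_numerical_range_axioms.intro)
  fix y :: "'b \<Rightarrow> real" and u v :: 'b and w w' :: real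
  assume "y \<in> rdual_sphere"
  then have y: "bounded_linear y" "onorm y = 1" by (auto simp: rdual_sphere_def)
  show "y (u + v) = y u + y v" using y(1) by (simp add: linear_add bounded_linear.linear)
  show "y (w *\<^sub>R v) = w * y v" using y(1) by (simp add: linear_scale bounded_linear.linear)
  show "norm (y v) \<le> norm v" using onorm[OF y(1), of v] y(2) by simp
qed (use assms exists_rdual_sphere_norming in \<open>auto simp: scaleR_diff_left bounded_linear_scaleR_right\<close>)

lemma G_numerical_range_complex:
  fixes G T :: "'a::complex_normed_vector_sp \<Rightarrow> 'b::complex_normed_vector_sp"
  assumes "cbounded_linear G" "onorm G = 1" "cbounded_linear T"
  shows "G_numerical_range G T cdual_sphere Re scaleC"
proof (intro G_numerical_range.intro norm_one_operator.intro G_numerical_range_axioms.intro)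
  fix y :: "'b \<Rightarrow> complex" and u v :: 'b and w w' :: complex
  assume "y \<in> cdual_sphere"
  then have y: "bounded_linear y" "onorm y = 1" "\<And>c x. y (scaleC c x) = c * y x"
    by (auto simp: cdual_sphere_def)
  show "y (u + v) = y u + y v" using y(1) by (simp add: linear_add bounded_linear.linear)
  show "y (scaleC w v) = w * y v" by (fact y(3))
  show "norm (y v) \<le> norm v" using onorm[OF y(1), of v] y(2) by simp
qed (use assms exists_cdual_sphere_norming in \<open>auto simp: cbounded_linear_def bounded_linear_scaleC
      norm_scaleC scaleC_diff_left bounded_linear_Re complex_Re_le_cmod\<close>)

corollary Sup_normG_rotations_iff_nuG_real:
  fixes G T :: "'a::real_normed_vector \<Rightarrow> 'b::real_normed_vector"
  assumes "bounded_linear G" "onorm G = 1" "bounded_linear T"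
  shows "Sup ((\<lambda>\<omega>. normG G (\<lambda>x. G x + \<omega> *\<^sub>R T x)) ` {\<omega>. \<bar>\<omega>\<bar> = 1}) = 1 + normG G T
    \<longleftrightarrow> nuG_real G T = normG G T"
proof -
  interpret G_numerical_range G T rdual_sphere "\<lambda>r. r" scaleR
    using assms by (rule G_numerical_range_real)
  have "{\<omega>::real. \<bar>\<omega>\<bar> = 1} = sphere 0 1" by auto
  then show ?thesis
    using Sup_normG_F_eq_iff unfolding nuG_real_def VG_real_def F_def real_norm_def[symmetric] by simp
qed

corollary Sup_normG_rotations_iff_nuG_complex:
  fixes G T :: "'a::complex_normed_vector_sp \<Rightarrow> 'b::complex_normed_vector_sp"
  assumes "cbounded_linear G" "onorm G = 1" "cbounded_linear T"
  shows "Sup ((\<lambda>\<omega>. normG G (\<lambda>x. G x + scaleC \<omega> (T x))) ` {\<omega>. cmod \<omega> = 1}) = 1 + normG G T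
    \<longleftrightarrow> nuG_complex G T = normG G T"
proof -
  interpret G_numerical_range G T cdual_sphere Re scaleC
    using assms by (rule G_numerical_range_complex)
  have "{\<omega>::complex. cmod \<omega> = 1} = sphere 0 1" by auto
  then show ?thesis
    using Sup_normG_F_eq_iff unfolding nuG_complex_def VG_complex_def F_def by simp
qed

theorem theorem3p1:
  shows
  "(\<forall>(G::'a::banach \<Rightarrow> 'b::banach) T.
      bounded_linear G \<and> onorm G = 1 \<and>
      (\<forall>S::'a \<Rightarrow> 'b. bounded_linear S \<and> normG G S = 0 \<longrightarrow> S = (\<lambda>x. 0)) \<and>
      bounded_linear T \<longrightarrow>
      ((Sup ((\<lambda>\<omega>. normG G (\<lambda>x. G x + \<omega> *\<^sub>R T x)) ` {\<omega>::real. \<bar>\<omega>\<bar> = 1}) = 1 + normG G T)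
        \<longleftrightarrow> nuG_real G T = normG G T))
   \<and>
   (\<forall>(G::'c::complex_banach_sp \<Rightarrow> 'd::complex_banach_sp) T.
      cbounded_linear G \<and> onorm G = 1 \<and>
      (\<forall>S::'c \<Rightarrow> 'd. cbounded_linear S \<and> normG G S = 0 \<longrightarrow> S = (\<lambda>x. 0)) \<and>
      cbounded_linear T \<longrightarrow>
      ((Sup ((\<lambda>\<omega>. normG G (\<lambda>x. G x + scaleC \<omega> (T x))) ` {\<omega>::complex. cmod \<omega> = 1}) = 1 + normG G T)
        \<longleftrightarrow> nuG_complex G T = normG G T))"
  using Sup_normG_rotations_iff_nuG_real Sup_normG_rotations_iff_nuG_complex by blast

end
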